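(* Let $X$ be a countable set and let $w$ be an essentially locally finite weight on $X$ which is geodesically complete. Then for every $x,y\in X$ there is a $w$-geodesic from $x$ to $y$.
   Context: A weight on $X$ is a symmetric function $w:X\times X\to[0,\infty]$ with $w(x,y)=0$ iff $x=y$; it is essentially locally finite if $\#\{y\in X\mid w(x,y)<R\}<\infty$ for all $x\in X$, $R>0$. A path from $x$ to $y$ is a finite sequence $(x_0,\dots,x_n)$ of pairwise distinct elements of $X$ with $x_0=x$, $x_n=y$; an infinite path is a sequence $(x_0,x_1,\dots)$ of pairwise distinct elements. The $w$-length is $l_w=\sum_i w(x_{i-1},x_i)$ (finite or infinite sum), and $\delta_w(x,y)$ is the infimum of $l_w$ over all paths from $x$ to $y$. A $w$-geodesic from $x$ to $y$ is a path with $l_w(\gamma)=\delta_w(x,y)$; an infinite path $(x_0,x_1,\dots)$ is an infinite $w$-geodesic if $(x_0,\dots,x_n)$ is a $w$-geodesic for every $n$. $w$ is geodesically complete if every infinite $w$-geodesic has infinite $w$-length. *)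

theory Defs
  imports "HOL-Analysis.Analysis" "HOL-Library.Extended_Nonnegative_Real"
begin

definition is_weight :: "'a set \<Rightarrow> ('a \<Rightarrow> 'a \<Rightarrow> ennreal) \<Rightarrow> bool" where
  "is_weight X w \<longleftrightarrow>
     (\<forall>x\<in>X. \<forall>y\<in>X. w x y = w y x) \<and> (\<forall>x\<in>X. \<forall>y\<in>X. w x y = 0 \<longleftrightarrow> x = y)"

definition ess_locally_finite :: "'a set \<Rightarrow> ('a \<Rightarrow> 'a \<Rightarrow> ennreal) \<Rightarrow> bool" where
  "ess_locally_finite X w \<longleftrightarrow>
     (\<forall>x\<in>X. \<forall>R::real. R > 0 \<longrightarrow> finite {y\<in>X. w x y < ennreal R})"

definition is_path :: "'a set \<Rightarrow> 'a \<Rightarrow> 'a \<Rightarrow> 'a list \<Rightarrow> bool" where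
  "is_path X x y xs \<longleftrightarrow> xs \<noteq> [] \<and> distinct xs \<and> set xs \<subseteq> X \<and> hd xs = x \<and> last xs = y"

definition path_length :: "('a \<Rightarrow> 'a \<Rightarrow> ennreal) \<Rightarrow> 'a list \<Rightarrow> ennreal" where
  "path_length w xs = sum_list (map (\<lambda>(a, b). w a b) (zip xs (tl xs)))"

definition delta :: "'a set \<Rightarrow> ('a \<Rightarrow> 'a \<Rightarrow> ennreal) \<Rightarrow> 'a \<Rightarrow> 'a \<Rightarrow> ennreal" where
  "delta X w x y = (INF xs\<in>{xs. is_path X x y xs}. path_length w xs)"

definition is_geodesic :: "'a set \<Rightarrow> ('a \<Rightarrow> 'a \<Rightarrow> ennreal) \<Rightarrow> 'a \<Rightarrow> 'a \<Rightarrow> 'a list \<Rightarrow> bool" where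
  "is_geodesic X w x y xs \<longleftrightarrow> is_path X x y xs \<and> path_length w xs = delta X w x y"

definition is_infinite_path :: "'a set \<Rightarrow> (nat \<Rightarrow> 'a) \<Rightarrow> bool" where
  "is_infinite_path X f \<longleftrightarrow> inj f \<and> range f \<subseteq> X"

definition infinite_path_length :: "('a \<Rightarrow> 'a \<Rightarrow> ennreal) \<Rightarrow> (nat \<Rightarrow> 'a) \<Rightarrow> ennreal" where
  "infinite_path_length w f = (\<Sum>i. w (f i) (f (Suc i)))"

definition is_infinite_geodesic :: "'a set \<Rightarrow> ('a \<Rightarrow> 'a \<Rightarrow> ennreal) \<Rightarrow> (nat \<Rightarrow> 'a) \<Rightarrow> bool" where
  "is_infinite_geodesic X w f \<longleftrightarrow> is_infinite_path X f \<and>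
     (\<forall>n. is_geodesic X w (f 0) (f n) (map f [0..<Suc n]))"

definition geodesically_complete :: "'a set \<Rightarrow> ('a \<Rightarrow> 'a \<Rightarrow> ennreal) \<Rightarrow> bool" where
  "geodesically_complete X w \<longleftrightarrow>
     (\<forall>f. is_infinite_geodesic X w f \<longrightarrow> infinite_path_length w f = \<infinity>)"

end

theory Submission
  imports Defs
begin

(* Call a nonempty path p starting at x an approximate geodesic prefix if it extends to paths from
   x to y whose lengths come arbitrarily close to delta(x, y). Such a p is a geodesic from x to its
   endpoint, since a shorter path to that endpoint could be spliced in front of the extensions.
   If delta(x, y) is finite and p does not end in y, local finiteness leaves only finitely many
   candidates for the next vertex, and if none of them gave an approximate prefix, the least of
   their finitely many failing margins would be a failing margin for p itself. So if no geodesic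
   reaches y, extending [x] forever yields an infinite geodesic of length at most delta(x, y) < \<infinity>,
   contradicting geodesic completeness. *)

lemma path_length_singleton [simp]: "path_length w [a] = 0"
  by (simp add: path_length_def)

lemma path_length_Cons_Cons [simp]: "path_length w (a # b # xs) = w a b + path_length w (b # xs)"
  by (simp add: path_length_def)

lemma path_length_append:
  "p \<noteq> [] \<Longrightarrow> path_length w (p @ r) = path_length w p + path_length w (last p # r)"
proof (induction p)
  case (Cons a p)
  then show ?case by (cases p) (simp_all add: add.assoc)
qed simp

lemma path_length_map_upt: "path_length w (map f [0..<Suc n]) = (\<Sum>i<n. w (f i) (f (Suc i)))"
proof (induction n)
  case (Suc n)
  have "map f [0..<Suc (Suc n)] = map f [0..<Suc n] @ [f (Suc n)]" by simp
  moreover have "last (map f [0..<Suc n]) = f n" by simp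
  ultimately show ?case
    using Suc path_length_append[of "map f [0..<Suc n]" w "[f (Suc n)]"] by (simp del: upt_Suc)
qed simp

lemma walk_shortcut:
  assumes "xs \<noteq> []" "set xs \<subseteq> X"
  shows "\<exists>ys. is_path X (hd xs) (last xs) ys \<and> path_length w ys \<le> path_length w xs"
  using assms
proof (induction "length xs" arbitrary: xs rule: less_induct)
  case less
  show ?case
  proof (cases "distinct xs")
    case True
    then show ?thesis using less.prems by (auto simp: is_path_def)
  next
    case False
    then obtain as bs cs v where xs: "xs = (as @ [v]) @ (bs @ [v]) @ cs"
      using not_distinct_decomp[of xs] by auto
    define xs' where "xs' = (as @ [v]) @ cs"
    have loop: "path_length w (v # bs @ [v] @ cs) = path_length w (v # bs @ [v]) + path_length w (v # cs)"
      using path_length_append[of "v # bs @ [v]" w cs] by simp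
    have "path_length w xs' \<le> path_length w xs"
      unfolding xs xs'_def
      using loop path_length_append[of "as @ [v]" w "bs @ [v] @ cs"] path_length_append[of "as @ [v]" w cs]
      by (simp add: add_left_mono)
    moreover have "xs' \<noteq> []" "length xs' < length xs" "set xs' \<subseteq> X"
      using less.prems unfolding xs xs'_def by auto
    moreover have "hd xs' = hd xs" "last xs' = last xs"
      unfolding xs xs'_def by (cases as; simp)+
    ultimately show ?thesis
      using less.hyps[of xs'] by (metis order.trans)
  qed
qed

lemma delta_le_path_length: "is_path X x y p \<Longrightarrow> delta X w x y \<le> path_length w p"
  unfolding delta_def by (rule INF_lower) simp

lemma delta_le_walk_length:
  "xs \<noteq> [] \<Longrightarrow> set xs \<subseteq> X \<Longrightarrow> delta X w (hd xs) (last xs) \<le> path_length w xs"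
  by (meson delta_le_path_length order_trans walk_shortcut)

lemma geodesic_if_delta_infinite:
  "delta X w x y = \<infinity> \<Longrightarrow> is_path X x y p \<Longrightarrow> is_geodesic X w x y p"
  using delta_le_path_length[of X x y p w] by (simp add: is_geodesic_def top_unique)

lemma path_exists: "x \<in> X \<Longrightarrow> y \<in> X \<Longrightarrow> \<exists>p. is_path X x y p"
  by (intro exI[of _ "remdups [x, y]"]) (auto simp: is_path_def)

lemma is_path_prefix: "is_path X x y (p @ r) \<Longrightarrow> p \<noteq> [] \<Longrightarrow> is_path X x (last p) p"
  by (auto simp: is_path_def)

definition approx_geodesic_prefix :: "'a set \<Rightarrow> ('a \<Rightarrow> 'a \<Rightarrow> ennreal) \<Rightarrow> 'a \<Rightarrow> 'a \<Rightarrow> 'a list \<Rightarrow> bool" where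
  "approx_geodesic_prefix X w x y p \<longleftrightarrow> p \<noteq> [] \<and>
     (\<forall>e>0. \<exists>r. is_path X x y (p @ r) \<and> path_length w (p @ r) < delta X w x y + ennreal e)"

lemma approx_geodesic_prefix_singleton:
  assumes "delta X w x y \<noteq> \<infinity>"
  shows "approx_geodesic_prefix X w x y [x]"
  unfolding approx_geodesic_prefix_def
proof (intro conjI allI impI)
  fix e :: real
  assume "e > 0"
  with assms have "delta X w x y < delta X w x y + ennreal e"
    by (metis add.right_neutral ennreal_add_left_cancel_less ennreal_less_zero_iff)
  then obtain q where q: "is_path X x y q" "path_length w q < delta X w x y + ennreal e"
    unfolding delta_def by (subst (asm) INF_less_iff) auto
  then have "q = [x] @ tl q"
    unfolding is_path_def by (cases q) auto
  with q show "\<exists>r. is_path X x y ([x] @ r) \<and> path_length w ([x] @ r) < delta X w x y + ennreal e"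
    by metis
qed simp

lemma approx_geodesic_prefix_length_le:
  assumes "approx_geodesic_prefix X w x y p"
  shows "path_length w p \<le> delta X w x y"
proof (rule ennreal_le_epsilon)
  fix e :: real
  assume "0 < e"
  with assms obtain r where "path_length w (p @ r) < delta X w x y + ennreal e"
    unfolding approx_geodesic_prefix_def by blast
  moreover have "path_length w p \<le> path_length w (p @ r)"
    using assms by (simp add: approx_geodesic_prefix_def path_length_append)
  ultimately show "path_length w p \<le> delta X w x y + ennreal e"
    by simp
qed

lemma approx_geodesic_prefix_is_geodesic:
  assumes p: "approx_geodesic_prefix X w x y p"
  shows "is_geodesic X w x (last p) p"
proof -
  have "p \<noteq> []"
    using p by (simp add: approx_geodesic_prefix_def)
  have "path_length w p \<le> path_length w q" if q: "is_path X x (last p) q" for q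
  proof (rule ennreal_le_epsilon)
    fix e :: real
    assume "0 < e"
    with p obtain r where r: "is_path X x y (p @ r)"
      and short: "path_length w (p @ r) < delta X w x y + ennreal e"
      unfolding approx_geodesic_prefix_def by blast
    define c where "c = path_length w (last p # r)"
    have "q \<noteq> []" "hd q = x" "last q = last p" "set q \<subseteq> X"
      using q by (auto simp: is_path_def)
    moreover have "last (p @ r) = y" "set r \<subseteq> X"
      using r by (auto simp: is_path_def)
    ultimately have "delta X w x y \<le> path_length w (q @ r)"
      using delta_le_walk_length[of "q @ r" X w] by (cases "r = []") auto
    also have "\<dots> = path_length w q + c"
      using \<open>q \<noteq> []\<close> \<open>last q = last p\<close> by (simp add: path_length_append c_def)
    finally have "c + path_length w p < c + (path_length w q + ennreal e)"
      using short \<open>p \<noteq> []\<close> by (simp add: path_length_append c_def add_ac add_right_mono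
        order_less_le_trans)
    then show "path_length w p \<le> path_length w q + ennreal e"
      by (simp add: ennreal_add_left_cancel_less less_imp_le)
  qed
  then have "path_length w p \<le> delta X w x (last p)"
    unfolding delta_def by (auto intro: INF_greatest)
  moreover have "is_path X x (last p) p"
    using p \<open>p \<noteq> []\<close> unfolding approx_geodesic_prefix_def by (meson is_path_prefix zero_less_one)
  ultimately show ?thesis
    by (simp add: is_geodesic_def antisym delta_le_path_length)
qed

lemma approx_geodesic_prefix_snoc:
  assumes "ess_locally_finite X w" and finite_delta: "delta X w x y \<noteq> \<infinity>"
    and p: "approx_geodesic_prefix X w x y p" and "last p \<noteq> y"
  shows "\<exists>z. approx_geodesic_prefix X w x y (p @ [z])"
proof (rule ccontr)
  assume none: "\<nexists>z. approx_geodesic_prefix X w x y (p @ [z])"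
  define D where "D = delta X w x y"
  define F where "F = {z \<in> X. w (last p) z < D + ennreal 1}"
  obtain r0 where "is_path X x y (p @ r0)" and "p \<noteq> []"
    using p unfolding approx_geodesic_prefix_def by (meson zero_less_one)
  then have "last p \<in> X"
    by (auto simp: is_path_def)
  moreover have "D + ennreal 1 = ennreal (enn2real D + 1)"
    using finite_delta by (simp add: D_def ennreal_enn2real_if)
  ultimately have "finite F"
    using assms(1) unfolding ess_locally_finite_def F_def
    by (metis add_nonneg_pos enn2real_nonneg zero_less_one)
  have "\<forall>z\<in>F. \<exists>e>0. \<forall>r. is_path X x y (p @ z # r) \<longrightarrow> D + ennreal e \<le> path_length w (p @ z # r)"
    using none \<open>p \<noteq> []\<close> by (auto simp: approx_geodesic_prefix_def D_def not_less)
  then obtain e where e_pos: "\<And>z. z \<in> F \<Longrightarrow> e z > 0"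
    and e_blocks: "\<And>z r. z \<in> F \<Longrightarrow> is_path X x y (p @ z # r) \<Longrightarrow>
      D + ennreal (e z) \<le> path_length w (p @ z # r)"
    by metis
  define \<epsilon> where "\<epsilon> = Min (insert 1 (e ` F))"
  have "\<epsilon> > 0" "\<epsilon> \<le> 1" "\<And>z. z \<in> F \<Longrightarrow> \<epsilon> \<le> e z"
    using \<open>finite F\<close> e_pos by (auto simp: \<epsilon>_def)
  then obtain r where r: "is_path X x y (p @ r)" and short: "path_length w (p @ r) < D + ennreal \<epsilon>"
    using p unfolding approx_geodesic_prefix_def D_def by blast
  have "r \<noteq> []"
    using r \<open>last p \<noteq> y\<close> by (auto simp: is_path_def)
  then obtain z r' where z: "r = z # r'"
    by (cases r) auto
  have "w (last p) z \<le> path_length w (p @ r)"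
    using \<open>p \<noteq> []\<close> by (simp add: z path_length_append add_increasing2)
  also have "\<dots> < D + ennreal \<epsilon>" by (fact short)
  also have "\<dots> \<le> D + ennreal 1"
    using \<open>\<epsilon> \<le> 1\<close> by (simp add: add_left_mono)
  finally have "z \<in> F"
    using r z by (auto simp: F_def is_path_def)
  then have "D + ennreal (e z) \<le> path_length w (p @ r)"
    using e_blocks r z by blast
  moreover have "D + ennreal \<epsilon> \<le> D + ennreal (e z)"
    using \<open>z \<in> F\<close> \<open>\<And>z. z \<in> F \<Longrightarrow> \<epsilon> \<le> e z\<close> by (simp add: add_left_mono ennreal_leI)
  ultimately show False
    using short by (metis leD order_trans)
qed

lemma snoc_closed_imp_sequence:
  assumes "Q [x]" and "\<And>p. Q p \<Longrightarrow> \<exists>z. Q (p @ [z])"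
  shows "\<exists>f. f 0 = x \<and> (\<forall>n. Q (map f [0..<Suc n]))"
proof -
  obtain nxt where nxt: "\<And>p. Q p \<Longrightarrow> Q (p @ [nxt p])"
    using assms(2) by metis
  define P where "P = rec_nat [x] (\<lambda>_ p. p @ [nxt p])"
  define f where "f n = last (P n)" for n
  have "P n = map f [0..<Suc n]" for n
    by (induction n) (simp_all add: P_def f_def)
  moreover have "Q (P n)" for n
    by (induction n) (simp_all add: P_def assms(1) nxt)
  moreover have "f 0 = x"
    by (simp add: f_def P_def)
  ultimately show ?thesis
    by auto
qed

lemma approx_geodesic_prefixes_infinite_geodesic:
  assumes "f 0 = x" and prefixes: "\<And>n. approx_geodesic_prefix X w x y (map f [0..<Suc n])"
  shows "is_infinite_geodesic X w f" and "infinite_path_length w f \<le> delta X w x y"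
proof -
  have geodesic: "is_geodesic X w (f 0) (f n) (map f [0..<Suc n])" for n
    using approx_geodesic_prefix_is_geodesic[OF prefixes[of n]] assms(1) by simp
  then have distinct: "distinct (map f [0..<Suc n])" and "f n \<in> X" for n
    by (auto simp: is_geodesic_def is_path_def)
  have "inj f"
  proof (rule injI)
    fix m n
    assume "f m = f n"
    have "inj_on f {0..<Suc (max m n)}"
      using distinct[of "max m n"] by (simp add: distinct_map del: upt_Suc)
    from inj_onD[OF this \<open>f m = f n\<close>] show "m = n"
      by simp
  qed
  with geodesic \<open>\<And>n. f n \<in> X\<close> show "is_infinite_geodesic X w f"
    by (auto simp: is_infinite_geodesic_def is_infinite_path_def)
  show "infinite_path_length w f \<le> delta X w x y"
    unfolding infinite_path_length_def
  proof (rule suminf_le_const[OF summableI])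
    fix n
    show "(\<Sum>i<n. w (f i) (f (Suc i))) \<le> delta X w x y"
      using approx_geodesic_prefix_length_le[OF prefixes[of n]] unfolding path_length_map_upt .
  qed
qed

theorem lemma2p5:
  fixes X :: "'a set" and w :: "'a \<Rightarrow> 'a \<Rightarrow> ennreal"
  assumes "countable X"
    and "is_weight X w"
    and "ess_locally_finite X w"
    and "geodesically_complete X w"
    and "x \<in> X" and "y \<in> X"
  shows "\<exists>xs. is_geodesic X w x y xs"
proof (cases "delta X w x y = \<infinity>")
  case True
  with path_exists[OF assms(5,6)] show ?thesis
    by (metis geodesic_if_delta_infinite)
next
  case False
  show ?thesis
  proof (rule ccontr)
    assume no_geodesic: "\<nexists>xs. is_geodesic X w x y xs"
    have "\<exists>z. approx_geodesic_prefix X w x y (p @ [z])" if p: "approx_geodesic_prefix X w x y p" for p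
    proof -
      have "last p \<noteq> y"
      proof
        assume "last p = y"
        with approx_geodesic_prefix_is_geodesic[OF p] no_geodesic show False
          by simp
      qed
      then show ?thesis
        by (rule approx_geodesic_prefix_snoc[OF assms(3) False p])
    qed
    from snoc_closed_imp_sequence[OF approx_geodesic_prefix_singleton[OF False] this]
    obtain f where "f 0 = x" "\<And>n. approx_geodesic_prefix X w x y (map f [0..<Suc n])"
      by auto
    note approx_geodesic_prefixes_infinite_geodesic[OF this]
    with assms(4) False show False
      unfolding geodesically_complete_def by (simp add: top_unique)
  qed
qed

end
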